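(* In the network model described in the context, let $\pi$ be an admissible cyclic policy with maximum inter-scheduling times $k^{\pi}_e$, and suppose the slice widths satisfy $w_{i,e}\ge\lambda_i k^{\pi}_e$ for all $e\in\mathcal{T}^{(i)}$. Then the delay deficit of any packet belonging to flow $f_i$ is never larger than zero when it arrives at a new link of its route.
   Context: Network model: directed graph $G=(V,E)$, slotted time, link capacities $c_e$, interference given by a conflict graph on links with feasible activation sets $\mathcal{M}$. Flow $f_i$ has fixed route $\mathcal{T}^{(i)}$ and deterministic fluid arrival rate $\lambda_i>0$ per slot at its source. Link $e\in\mathcal{T}^{(i)}$ reserves a slice $w_{i,e}$ for $f_i$ with its own first-come-first-served queue (initially empty). An admissible policy activates $\mu^\pi(t)\in\mathcal{M}$ in each slot and is work-conserving (an activated link serves $\min\{Q_{i,e}(t),w_{i,e}\}$ from each slice queue; served units proceed to the next link of the route). A cyclic policy satisfies $\mu^\pi(t)=\mu^\pi(t+K^\pi)$ for all $t\ge0$. The maximum inter-scheduling time $k_e^\pi$ of link $e$ is the largest number of slots between two consecutive activations of $e$ (cyclically over the period), so that $e$ is activated at least once in every window of $k_e^\pi$ consecutive slots. For a packet $l$ of $f_i$ arriving at its source at time $t_0^l$, its age at time $t$ is $a^l(t)=t-t_0^l$, and its delay deficit is $\delta^l(t)=a^l(t)-\sum_{e\in\tilde{T}^{(l)}}k_e^\pi$, where $\tilde{T}^{(l)}$ is the set of links of its route at which it has already been served (so $\delta^l=0$ on arrival at the source, it increases by one each slot, and decreases by $k_e^\pi$ when the packet is served at link $e$). *)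

theory Defs
  imports Complex_Main
begin

text \<open>Fluid, slotted-time model of one flow's slice queues along its route.
  Conventions: at every integer time t the source receives lam units (eligible
  for service in slot t); a link activated in slot t serves min(backlog, width)
  from the slice queue; the amount served in slot t arrives at the next link of
  the route at time t+1 (eligible for service in slot t+1).
  cum_out mu r lam w j t = total amount served by hop j (link r!j) during slots < t.\<close>

fun cum_out :: "(nat \<Rightarrow> 'e set) \<Rightarrow> 'e list \<Rightarrow> real \<Rightarrow> ('e \<Rightarrow> real) \<Rightarrow> nat \<Rightarrow> nat \<Rightarrow> real" where
  "cum_out mu r lam w j 0 = 0"
| "cum_out mu r lam w j (Suc t) =
     cum_out mu r lam w j t +
     (if r ! j \<in> mu t
      then min ((if j = 0 then lam * real (Suc t) else cum_out mu r lam w (j - 1) t)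
                - cum_out mu r lam w j t) (w (r ! j))
      else 0)"

definition cum_in :: "(nat \<Rightarrow> 'e set) \<Rightarrow> 'e list \<Rightarrow> real \<Rightarrow> ('e \<Rightarrow> real) \<Rightarrow> nat \<Rightarrow> nat \<Rightarrow> real" where
  "cum_in mu r lam w j t = (if j = 0 then lam * real (Suc t) else cum_out mu r lam w (j - 1) t)"

definition cyclic_policy :: "(nat \<Rightarrow> 'e set) \<Rightarrow> nat \<Rightarrow> bool" where
  "cyclic_policy mu K \<longleftrightarrow> K > 0 \<and> (\<forall>t. mu (t + K) = mu t)"

definition max_inter_sched :: "(nat \<Rightarrow> 'e set) \<Rightarrow> 'e \<Rightarrow> nat" where
  "max_inter_sched mu e =
     Max {b - a | a b. a < b \<and> e \<in> mu a \<and> e \<in> mu b \<and> (\<forall>s. a < s \<and> s < b \<longrightarrow> e \<notin> mu s)}"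

text \<open>Fluid packets are identified by their FCFS position x \<ge> 0 in the flow's
  cumulative arrival stream; packet x arrives at the source at the time t with
  lam*t \<le> x < lam*(t+1).\<close>
definition src_arrival :: "real \<Rightarrow> real \<Rightarrow> nat" where
  "src_arrival lam x = nat \<lfloor>x / lam\<rfloor>"

definition served_in_slot :: "(nat \<Rightarrow> 'e set) \<Rightarrow> 'e list \<Rightarrow> real \<Rightarrow> ('e \<Rightarrow> real) \<Rightarrow> real \<Rightarrow> nat \<Rightarrow> nat \<Rightarrow> bool" where
  "served_in_slot mu r lam w x j tau \<longleftrightarrow>
     cum_out mu r lam w j tau \<le> x \<and> x < cum_out mu r lam w j (Suc tau)"

definition served_links :: "(nat \<Rightarrow> 'e set) \<Rightarrow> 'e list \<Rightarrow> real \<Rightarrow> ('e \<Rightarrow> real) \<Rightarrow> real \<Rightarrow> nat \<Rightarrow> 'e set" where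
  "served_links mu r lam w x t =
     {r ! m | m. m < length r \<and> (\<exists>tau < t. served_in_slot mu r lam w x m tau)}"

definition delay_deficit :: "(nat \<Rightarrow> 'e set) \<Rightarrow> 'e list \<Rightarrow> real \<Rightarrow> ('e \<Rightarrow> real) \<Rightarrow> real \<Rightarrow> nat \<Rightarrow> int" where
  "delay_deficit mu r lam w x t =
     int t - int (src_arrival lam x) - (\<Sum>e \<in> served_links mu r lam w x t. int (max_inter_sched mu e))"

end

theory Submission
  imports Defs
begin

(* Compare the amount served by hop j with the fluid arrival stream lam (t + 1) delayed
   by D_j = k_0 + ... + k_j slots. A link that is active in every window of k slots and
   whose slice is at least lam k wide either empties its queue or serves lam k units per
   window, so crossing one hop adds at most k slots of lag. Hence by time t_0 + D_j, where
   t_0 is the arrival slot of packet x, hop j has served more than lam (t_0 + 1) > x units: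
   x has left hop j, and all earlier hops, so its age is at most the sum of k_e over the
   links it has crossed. *)

definition active_in_every_window :: "(nat \<Rightarrow> 'e set) \<Rightarrow> 'e \<Rightarrow> nat \<Rightarrow> bool" where
  "active_in_every_window mu e k \<longleftrightarrow> (\<forall>a. \<exists>s. a \<le> s \<and> s < a + k \<and> e \<in> mu s)"

definition lags_at_most :: "real \<Rightarrow> nat \<Rightarrow> (nat \<Rightarrow> real) \<Rightarrow> bool" where
  "lags_at_most lam D f \<longleftrightarrow> (\<forall>t. lam * (real t + 1 - real D) \<le> f t)"

lemma cyclic_policy_periodic:
  assumes "cyclic_policy mu K"
  shows "mu (t + n * K) = mu t"
proof (induction n)
  case (Suc n)
  have "mu (t + Suc n * K) = mu ((t + n * K) + K)" by (simp add: add_ac)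
  with Suc assms show ?case by (simp add: cyclic_policy_def)
qed simp

lemma inter_sched_gap_le_period:
  assumes cyc: "cyclic_policy mu K" and "a < b" "e \<in> mu a"
    and idle: "\<forall>s. a < s \<and> s < b \<longrightarrow> e \<notin> mu s"
  shows "b - a \<le> K"
proof (rule ccontr)
  assume "\<not> b - a \<le> K"
  then have "a < a + K" "a + K < b" using cyc by (auto simp: cyclic_policy_def)
  moreover have "e \<in> mu (a + K)" using cyclic_policy_periodic[OF cyc, of a 1] \<open>e \<in> mu a\<close> by simp
  ultimately show False using idle by blast
qed

lemma max_inter_sched_ge_gap:
  assumes cyc: "cyclic_policy mu K" and "a < b" "e \<in> mu a" "e \<in> mu b"
    and idle: "\<forall>s. a < s \<and> s < b \<longrightarrow> e \<notin> mu s"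
  shows "b - a \<le> max_inter_sched mu e"
proof -
  let ?G = "{b - a | a b. a < b \<and> e \<in> mu a \<and> e \<in> mu b
                         \<and> (\<forall>s. a < s \<and> s < b \<longrightarrow> e \<notin> mu s)}"
  have "?G \<subseteq> {..K}" using inter_sched_gap_le_period[OF cyc] by fastforce
  then have "finite ?G" by (rule finite_subset) simp
  moreover have "b - a \<in> ?G" using assms by blast
  ultimately show ?thesis unfolding max_inter_sched_def by (rule Max_ge)
qed

lemma nat_consecutive_around:
  fixes P :: "nat \<Rightarrow> bool"
  assumes "P p" "p < c" "P q" "c \<le> q"
  obtains a b where "a < c" "c \<le> b" "P a" "P b" "\<forall>s. a < s \<and> s < b \<longrightarrow> \<not> P s"
proof
  define a where "a = (GREATEST s. s < c \<and> P s)"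
  define b where "b = (LEAST s. c \<le> s \<and> P s)"
  show "a < c" "P a" using GreatestI_nat[of "\<lambda>s. s < c \<and> P s" p c] assms by (auto simp: a_def)
  show "c \<le> b" "P b" using LeastI[of "\<lambda>s. c \<le> s \<and> P s" q] assms by (auto simp: b_def)
  show "\<forall>s. a < s \<and> s < b \<longrightarrow> \<not> P s"
  proof (intro allI impI)
    fix s assume s: "a < s \<and> s < b"
    have "\<not> (s < c \<and> P s)"
      using Greatest_le_nat[of "\<lambda>s. s < c \<and> P s" s c] s by (auto simp: a_def)
    moreover have "\<not> (c \<le> s \<and> P s)" using not_less_Least[of s "\<lambda>s. c \<le> s \<and> P s"] s
      by (simp add: b_def)
    ultimately show "\<not> P s" by linarith
  qed
qed

lemma cyclic_policy_active_in_every_window: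
  assumes cyc: "cyclic_policy mu K" and "e \<in> mu t"
  shows "active_in_every_window mu e (max_inter_sched mu e)"
  unfolding active_in_every_window_def
proof
  fix a
  have K: "K > 0" using cyc by (simp add: cyclic_policy_def)
  let ?p = "t mod K"
  have "e \<in> mu ?p" using cyclic_policy_periodic[OF cyc, of ?p "t div K"] \<open>e \<in> mu t\<close> by simp
  moreover have "e \<in> mu (?p + (a + 1) * K)"
    using cyclic_policy_periodic[OF cyc, of ?p "a + 1"] calculation by simp
  moreover have "?p < a + K" "a + K \<le> ?p + (a + 1) * K"
    using K by (auto simp: trans_le_add2 intro: less_le_trans[OF mod_less_divisor])
  ultimately obtain p q where pq: "p < a + K" "a + K \<le> q" "e \<in> mu p" "e \<in> mu q"
    "\<forall>s. p < s \<and> s < q \<longrightarrow> e \<notin> mu s"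
    using nat_consecutive_around[of "\<lambda>s. e \<in> mu s"] by metis
  have "q - p \<le> max_inter_sched mu e"
    using max_inter_sched_ge_gap[OF cyc] pq by simp
  moreover have "e \<in> mu (q - K)" using cyclic_policy_periodic[OF cyc, of "q - K" 1] pq by simp
  ultimately show "\<exists>s. a \<le> s \<and> s < a + max_inter_sched mu e \<and> e \<in> mu s"
    using pq by (intro exI[of _ "q - K"]) auto
qed

lemma cum_out_Suc:
  "cum_out mu r lam w j (Suc t) = cum_out mu r lam w j t +
     (if r ! j \<in> mu t
      then min (cum_in mu r lam w j t - cum_out mu r lam w j t) (w (r ! j)) else 0)"
  by (simp add: cum_in_def)

declare cum_out.simps(2) [simp del]

lemma cum_in_Suc_hop: "cum_in mu r lam w (Suc j) = cum_out mu r lam w j"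
  by (simp add: fun_eq_iff cum_in_def)

lemma cum_out_bounded_by_cum_in:
  assumes "0 \<le> w (r ! j)" and "incseq (cum_in mu r lam w j)" and "0 \<le> cum_in mu r lam w j 0"
  shows "0 \<le> cum_out mu r lam w j t \<and> cum_out mu r lam w j t \<le> cum_in mu r lam w j t"
proof (induction t)
  case (Suc t)
  have "cum_in mu r lam w j t \<le> cum_in mu r lam w j (Suc t)"
    using \<open>incseq _\<close> by (simp add: incseq_Suc_iff)
  with Suc assms(1) show ?case unfolding cum_out_Suc by auto
qed (use assms in simp)

lemma nat_seq_crossing:
  fixes f :: "nat \<Rightarrow> 'a::linorder"
  shows "f 0 \<le> x \<Longrightarrow> x < f n \<Longrightarrow> \<exists>t<n. f t \<le> x \<and> x < f (Suc t)"
proof (induction n)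
  case (Suc n)
  then show ?case by (cases "x < f n") (auto intro: less_SucI)
qed simp

lemma src_arrival_bound:
  assumes "0 < lam" and "0 \<le> x"
  shows "x < lam * (real (src_arrival lam x) + 1)"
proof -
  have "real (src_arrival lam x) = of_int \<lfloor>x / lam\<rfloor>"
    using assms by (simp add: src_arrival_def)
  then have "x / lam < real (src_arrival lam x) + 1" by linarith
  with \<open>0 < lam\<close> show ?thesis by (simp add: field_simps)
qed

context
  fixes mu :: "nat \<Rightarrow> 'e set" and r :: "'e list" and lam :: real and w :: "'e \<Rightarrow> real"
  assumes lam_nonneg: "0 \<le> lam" and widths_nonneg: "\<forall>j<length r. 0 \<le> w (r ! j)"
begin

lemma cum_in_incseq_nonneg:
  "j < length r \<Longrightarrow> incseq (cum_in mu r lam w j) \<and> 0 \<le> cum_in mu r lam w j 0"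
proof (induction j)
  case 0
  then show ?case using lam_nonneg by (auto simp: cum_in_def incseq_def intro: mult_left_mono)
next
  case (Suc j)
  then have "j < length r" by simp
  then have "0 \<le> cum_out mu r lam w j t \<and> cum_out mu r lam w j t \<le> cum_in mu r lam w j t" for t
    using Suc.IH widths_nonneg cum_out_bounded_by_cum_in by blast
  then have "incseq (cum_out mu r lam w j)"
    using widths_nonneg Suc.prems by (auto simp: incseq_Suc_iff cum_out_Suc)
  then show ?case by (simp add: cum_in_Suc_hop)
qed

lemma cum_out_nonneg: "j < length r \<Longrightarrow> 0 \<le> cum_out mu r lam w j t"
  using cum_out_bounded_by_cum_in cum_in_incseq_nonneg widths_nonneg by blast

lemma cum_out_Suc_le_cum_in:
  "j < length r \<Longrightarrow> cum_out mu r lam w j (Suc t) \<le> cum_in mu r lam w j t"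
  using cum_out_bounded_by_cum_in[of w r j mu lam t] cum_in_incseq_nonneg widths_nonneg
  unfolding cum_out_Suc by auto

lemma cum_out_incseq: "j < length r \<Longrightarrow> incseq (cum_out mu r lam w j)"
  using cum_out_bounded_by_cum_in cum_in_incseq_nonneg widths_nonneg
  unfolding incseq_Suc_iff cum_out_Suc by fastforce

lemma cum_out_antimono_hop:
  assumes "j < length r" and "m \<le> j"
  shows "cum_out mu r lam w j t \<le> cum_out mu r lam w m t"
proof (rule lift_Suc_antimono_le_ivl[where N = "{m. Suc m < length r}", OF _ \<open>m \<le> j\<close>])
  fix n assume "n \<in> {m. Suc m < length r}"
  then have "Suc n < length r" by simp
  show "cum_out mu r lam w (Suc n) t \<le> cum_out mu r lam w n t"
  proof (cases t)
    case (Suc t')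
    have "cum_out mu r lam w (Suc n) t \<le> cum_out mu r lam w n t'"
      using cum_out_Suc_le_cum_in[OF \<open>Suc n < length r\<close>] Suc by (simp add: cum_in_Suc_hop)
    also have "\<dots> \<le> cum_out mu r lam w n t"
      using cum_out_incseq \<open>Suc n < length r\<close> Suc by (simp add: incseq_Suc_iff)
    finally show ?thesis .
  qed simp
qed (use assms in auto)

lemma lags_at_most_cum_out:
  assumes j: "j < length r" and input: "lags_at_most lam D (cum_in mu r lam w j)"
    and win: "active_in_every_window mu (r ! j) k" and wide: "lam * real k \<le> w (r ! j)"
  shows "lags_at_most lam (D + k) (cum_out mu r lam w j)"
  unfolding lags_at_most_def
proof
  fix t show "lam * (real t + 1 - real (D + k)) \<le> cum_out mu r lam w j t"
  proof (induction t rule: less_induct)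
    case (less t)
    show ?case
    proof (cases "t < k")
      case True
      then have "lam * (real t + 1 - real (D + k)) \<le> 0"
        using lam_nonneg by (simp add: mult_nonneg_nonpos)
      then show ?thesis using cum_out_nonneg[OF j, of t] by linarith
    next
      case False
      obtain s where "t - k \<le> s" "s < t - k + k" "r ! j \<in> mu s"
        using win unfolding active_in_every_window_def by blast
      with False have s: "s < t" "real t \<le> real s + real k" "r ! j \<in> mu s" by auto
      have "lam * (real s + 1 - real D) \<le> cum_out mu r lam w j (Suc s)"
      proof (cases "cum_in mu r lam w j s - cum_out mu r lam w j s \<le> w (r ! j)")
        case True
        then have "cum_out mu r lam w j (Suc s) = cum_in mu r lam w j s"
          using s(3) by (simp add: cum_out_Suc)
        then show ?thesis using input by (simp add: lags_at_most_def)
      next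
        case False
        \<comment> \<open>the slice is busy for the whole slot, so it serves its full width \<open>\<ge> lam k\<close>\<close>
        then have "cum_out mu r lam w j (Suc s) = cum_out mu r lam w j s + w (r ! j)"
          using s(3) by (simp add: cum_out_Suc)
        moreover have "lam * (real s + 1 - real (D + k)) \<le> cum_out mu r lam w j s"
          using less s(1) by blast
        ultimately show ?thesis using wide by (simp add: algebra_simps)
      qed
      also have "\<dots> \<le> cum_out mu r lam w j t"
        using cum_out_incseq[OF j] s(1) by (simp add: incseq_def)
      finally have "lam * (real s + 1 - real D) \<le> cum_out mu r lam w j t" .
      moreover have "lam * (real t + 1 - real (D + k)) \<le> lam * (real s + 1 - real D)"
        using s(2) lam_nonneg by (intro mult_left_mono) auto
      ultimately show ?thesis by linarith
    qed
  qed
qed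

lemma lags_at_most_cum_out_route:
  assumes win: "\<forall>m<length r. active_in_every_window mu (r ! m) (k m)"
    and wide: "\<forall>m<length r. lam * real (k m) \<le> w (r ! m)"
  shows "j < length r \<Longrightarrow> lags_at_most lam (\<Sum>m<Suc j. k m) (cum_out mu r lam w j)"
proof (induction j)
  case 0
  have "lags_at_most lam 0 (cum_in mu r lam w 0)"
    by (simp add: lags_at_most_def cum_in_def algebra_simps)
  then have "lags_at_most lam (0 + k 0) (cum_out mu r lam w 0)"
    using lags_at_most_cum_out[OF 0] win wide 0 by blast
  then show ?case by simp
next
  case (Suc j)
  then have "lags_at_most lam (\<Sum>m<Suc j. k m) (cum_in mu r lam w (Suc j))"
    by (simp add: cum_in_Suc_hop)
  then show ?case using lags_at_most_cum_out[OF Suc.prems] win wide Suc.prems by simp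
qed

lemma served_before_lag:
  assumes j: "j < length r" and lag: "lags_at_most lam D (cum_out mu r lam w j)"
    and served: "served_in_slot mu r lam w x j tau" and arrived: "x < lam * (real t0 + 1)"
  shows "tau < t0 + D"
proof (rule ccontr)
  assume "\<not> tau < t0 + D"
  then have "cum_out mu r lam w j (t0 + D) \<le> cum_out mu r lam w j tau"
    using cum_out_incseq[OF j] by (simp add: incseq_def)
  moreover have "lam * (real t0 + 1) \<le> cum_out mu r lam w j (t0 + D)"
    using lag[unfolded lags_at_most_def, rule_format, of "t0 + D"] by simp
  ultimately show False using served arrived by (simp add: served_in_slot_def)
qed

lemma served_links_upstream:
  assumes "0 \<le> x" and j: "j < length r" and served: "served_in_slot mu r lam w x j tau"
    and "m \<le> j"
  shows "r ! m \<in> served_links mu r lam w x (Suc tau)"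
proof -
  have "x < cum_out mu r lam w m (Suc tau)"
    using served cum_out_antimono_hop[OF j \<open>m \<le> j\<close>, of "Suc tau"]
    by (simp add: served_in_slot_def)
  then obtain t where "t < Suc tau" "served_in_slot mu r lam w x m t"
    using nat_seq_crossing[of "cum_out mu r lam w m" x] \<open>0 \<le> x\<close> by (auto simp: served_in_slot_def)
  moreover have "m < length r" using j \<open>m \<le> j\<close> by simp
  ultimately show ?thesis unfolding served_links_def by blast
qed

lemma sum_served_links_ge:
  fixes g :: "'e \<Rightarrow> nat"
  assumes "distinct r" and "0 \<le> x" and j: "j < length r"
    and served: "served_in_slot mu r lam w x j tau"
  shows "(\<Sum>m<Suc j. g (r ! m)) \<le> (\<Sum>e \<in> served_links mu r lam w x (Suc tau). g e)"
proof -
  have "inj_on ((!) r) {..<Suc j}"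
    using \<open>distinct r\<close> j by (auto simp: inj_on_def nth_eq_iff_index_eq)
  then have "(\<Sum>m<Suc j. g (r ! m)) = (\<Sum>e \<in> (!) r ` {..<Suc j}. g e)"
    by (simp add: sum.reindex)
  also have "\<dots> \<le> (\<Sum>e \<in> served_links mu r lam w x (Suc tau). g e)"
  proof (rule sum_mono2)
    show "finite (served_links mu r lam w x (Suc tau))"
      by (rule finite_subset[of _ "set r"]) (auto simp: served_links_def)
    show "(!) r ` {..<Suc j} \<subseteq> served_links mu r lam w x (Suc tau)"
      using served_links_upstream[OF \<open>0 \<le> x\<close> j served] by auto
  qed simp
  finally show ?thesis .
qed

end

theorem lemma2:
  fixes E :: "'e set" and M :: "'e set set" and mu :: "nat \<Rightarrow> 'e set" and K :: nat
    and F :: "'f set" and route :: "'f \<Rightarrow> 'e list" and lam :: "'f \<Rightarrow> real"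
    and w :: "'f \<Rightarrow> 'e \<Rightarrow> real" and i :: 'f
  assumes M_sub: "\<forall>S \<in> M. S \<subseteq> E"
    and admissible: "\<forall>t. mu t \<in> M"
    and cyclic: "cyclic_policy mu K"
    and routes: "\<forall>f \<in> F. route f \<noteq> [] \<and> distinct (route f) \<and> set (route f) \<subseteq> E"
    and rates: "\<forall>f \<in> F. lam f > 0"
    and finite_k: "\<forall>f \<in> F. \<forall>e \<in> set (route f). \<exists>t. e \<in> mu t"
    and widths: "\<forall>f \<in> F. \<forall>e \<in> set (route f). w f e \<ge> lam f * real (max_inter_sched mu e)"
    and i_flow: "i \<in> F"
  shows "\<forall>x \<ge> 0. \<forall>j tau. Suc j < length (route i)
           \<and> served_in_slot mu (route i) (lam i) (w i) x j tau
           \<longrightarrow> delay_deficit mu (route i) (lam i) (w i) x (Suc tau) \<le> 0"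
proof (intro allI impI)
  fix x :: real and j tau
  assume "x \<ge> 0"
    and hop: "Suc j < length (route i) \<and> served_in_slot mu (route i) (lam i) (w i) x j tau"
  let ?r = "route i" and ?k = "\<lambda>m. max_inter_sched mu (route i ! m)"
  let ?D = "\<Sum>m<Suc j. ?k m"
  have j: "j < length ?r" and served: "served_in_slot mu ?r (lam i) (w i) x j tau" using hop by auto
  have "distinct ?r" using routes i_flow by blast
  have "lam i > 0" using rates i_flow by blast
  then have lam_nonneg: "0 \<le> lam i" by simp
  have wide: "\<forall>m<length ?r. lam i * real (?k m) \<le> w i (?r ! m)"
    using widths i_flow by simp
  then have widths_nonneg: "\<forall>m<length ?r. 0 \<le> w i (?r ! m)"
    using lam_nonneg by (meson order.trans mult_nonneg_nonneg of_nat_0_le_iff)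
  have "\<forall>m<length ?r. active_in_every_window mu (?r ! m) (?k m)"
    using finite_k i_flow cyclic_policy_active_in_every_window[OF cyclic] by (meson nth_mem)
  then have "lags_at_most (lam i) ?D (cum_out mu ?r (lam i) (w i) j)"
    using lags_at_most_cum_out_route[OF lam_nonneg widths_nonneg _ wide j] by blast
  then have "tau < src_arrival (lam i) x + ?D"
    by (rule served_before_lag[OF lam_nonneg widths_nonneg j _ served
          src_arrival_bound[OF \<open>lam i > 0\<close> \<open>x \<ge> 0\<close>]])
  moreover have "?D \<le> (\<Sum>e \<in> served_links mu ?r (lam i) (w i) x (Suc tau). max_inter_sched mu e)"
    by (rule sum_served_links_ge[OF lam_nonneg widths_nonneg \<open>distinct ?r\<close> \<open>x \<ge> 0\<close> j served,
          where g = "max_inter_sched mu"])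
  ultimately show "delay_deficit mu ?r (lam i) (w i) x (Suc tau) \<le> 0"
    unfolding delay_deficit_def of_nat_sum[symmetric] by linarith
qed

end
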